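(* Let $n\ge2$ and $0\le r_l\le r_u<1$. For all $x,y\in\mathbb{B}^n$ with $r_l\le|x|\le|y|\le r_u$, $$\frac{1+r_l}{\sqrt{5+2r_l+r_l^2}}\,\mathrm{th}\frac{\rho_{\mathbb{B}^n}(x,y)}{2}\le w_{\mathbb{B}^n}(x,y)\le s_{\mathbb{B}^n}(x,y)\le\frac{1+r_u^2}{2\sqrt{1-2r_u+2r_u^2}}\,\mathrm{th}\frac{\rho_{\mathbb{B}^n}(x,y)}{2}.$$
   Context: $\mathbb{B}^n$ is the unit ball of $\mathbb{R}^n$; $S^{n-1}(x,r)$ is the Euclidean sphere of center $x$ and radius $r$. For a domain $G\subsetneq\mathbb{R}^n$ and $x\in G$, $d_G(x)=\inf\{|x-z|:z\in\partial G\}$. The hyperbolic metric of the unit ball satisfies $\mathrm{th}\frac{\rho_{\mathbb{B}^n}(x,y)}{2}=\frac{|x-y|}{\sqrt{|x-y|^2+(1-|x|^2)(1-|y|^2)}}$. The triangular ratio metric is $s_G(x,y)=\frac{|x-y|}{\inf_{z\in\partial G}(|x-z|+|z-y|)}$. For a convex domain $G$, the $w$-quasi-metric is $w_G(x,y)=\frac{|x-y|}{\min\{\inf_{\tilde y\in\tilde Y}|x-\tilde y|,\ \inf_{\tilde x\in\tilde X}|y-\tilde x|\}}$, where $\tilde X=\{\tilde x\in S^{n-1}(x,2d_G(x)):(x+\tilde x)/2\in\partial G\}$ and $\tilde Y=\{\tilde y\in S^{n-1}(y,2d_G(y)):(y+\tilde y)/2\in\partial G\}$. *)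

theory Defs
  imports "HOL-Analysis.Analysis"
begin

definition rho_ball :: "'a::euclidean_space \<Rightarrow> 'a \<Rightarrow> real" where
  "rho_ball x y = 2 * artanh (dist x y /
      sqrt ((dist x y)\<^sup>2 + (1 - (norm x)\<^sup>2) * (1 - (norm y)\<^sup>2)))"

definition dG :: "'a::euclidean_space set \<Rightarrow> 'a \<Rightarrow> real" where
  "dG G x = Inf {dist x z | z. z \<in> frontier G}"

definition s_metric :: "'a::euclidean_space set \<Rightarrow> 'a \<Rightarrow> 'a \<Rightarrow> real" where
  "s_metric G x y = dist x y / Inf {dist x z + dist z y | z. z \<in> frontier G}"

definition refl_set :: "'a::euclidean_space set \<Rightarrow> 'a \<Rightarrow> 'a set" where
  "refl_set G x = {xt \<in> sphere x (2 * dG G x). (x + xt) /\<^sub>R 2 \<in> frontier G}"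

definition w_metric :: "'a::euclidean_space set \<Rightarrow> 'a \<Rightarrow> 'a \<Rightarrow> real" where
  "w_metric G x y = dist x y /
     min (Inf {dist x yt | yt. yt \<in> refl_set G y}) (Inf {dist y xt | xt. xt \<in> refl_set G x})"

end

theory Submission
  imports Defs
begin

(* Write [x,y] = sqrt (|x-y|^2 + (1-|x|^2)(1-|y|^2)) for the Ahlfors bracket, so that
   th (rho(x,y)/2) = |x-y| / [x,y].

   The identity | |x|^2 y - x | = |x| [x,y] and the triangle inequality through a point z of
   the unit sphere give [x,y] <= |x-z| + |x| |z-y|.  Adding the same estimate with x and y
   exchanged yields 2 [x,y] <= (1 + r_u) (|x-z| + |z-y|), hence s <= (1 + r_u)/2 th (rho/2),
   which is sharper than the stated upper bound.

   The reflection points of y are the points 2m - y with m a unit vector and y = |y| m, the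
   mirror images of y in the tangent hyperplane at m.  The segment from x to such a point meets
   the sphere in a point z lying closer to y than to the mirror image, so the denominator of s
   is at most that of w.

   For the lower bound, the squared distance from x to the reflection point of y and [x,y]^2
   are both affine in the cosine of the angle between x and y, which reduces the comparison
   to the two collinear configurations. *)

lemma tanh_artanh_real:
  fixes q :: real
  assumes "-1 < q" "q < 1"
  shows "tanh (artanh q) = q"
proof -
  have "exp (- 2 * artanh q) = (1 - q) / (1 + q)"
    using assms by (simp add: artanh_def exp_minus)
  then have "tanh (artanh q) = (1 - (1 - q) / (1 + q)) / (1 + (1 - q) / (1 + q))"
    by (simp only: tanh_real_altdef)
  also have "\<dots> = q"
    using assms by (simp add: field_simps)
  finally show ?thesis .
qed

lemma norm_scaleR_diff_power2:
  fixes x y :: "'a::real_inner"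
  shows "(norm (c *\<^sub>R y - x))\<^sup>2 = c\<^sup>2 * (norm y)\<^sup>2 - 2 * c * inner x y + (norm x)\<^sup>2"
  by (simp only: power2_norm_eq_inner)
     (simp add: inner_diff_left inner_diff_right inner_commute algebra_simps power2_eq_square)

lemma scaleR_norm_sgn [simp]:
  fixes x :: "'a::real_normed_vector"
  shows "norm x *\<^sub>R sgn x = x"
  by (cases "x = 0") (simp_all add: sgn_div_norm)

lemma exists_unit_direction:
  fixes y :: "'a::euclidean_space"
  shows "\<exists>m. norm m = 1 \<and> y = norm y *\<^sub>R m"
proof (cases "y = 0")
  case True
  obtain e :: 'a where "e \<in> Basis"
    using nonempty_Basis by blast
  with True show ?thesis
    by (intro exI[of _ e]) auto
next
  case False
  then show ?thesis
    by (intro exI[of _ "sgn y"]) (simp add: norm_sgn)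
qed

definition ahlfors_bracket :: "'a::real_inner \<Rightarrow> 'a \<Rightarrow> real" where
  "ahlfors_bracket x y = sqrt ((dist x y)\<^sup>2 + (1 - (norm x)\<^sup>2) * (1 - (norm y)\<^sup>2))"

lemma ahlfors_bracket_radicand:
  fixes x y :: "'a::real_inner"
  shows "(dist x y)\<^sup>2 + (1 - (norm x)\<^sup>2) * (1 - (norm y)\<^sup>2)
    = 1 + (norm x)\<^sup>2 * (norm y)\<^sup>2 - 2 * inner x y"
  using norm_scaleR_diff_power2[of 1 y x]
  by (simp add: dist_norm norm_minus_commute inner_commute algebra_simps)

lemma ahlfors_bracket_radicand_ge:
  fixes x y :: "'a::real_inner"
  shows "(1 - norm x * norm y)\<^sup>2 \<le> 1 + (norm x)\<^sup>2 * (norm y)\<^sup>2 - 2 * inner x y"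
  using Cauchy_Schwarz_ineq2[of x y] by (simp add: power2_eq_square algebra_simps)

lemma ahlfors_bracket_radicand_nonneg:
  fixes x y :: "'a::real_inner"
  shows "0 \<le> 1 + (norm x)\<^sup>2 * (norm y)\<^sup>2 - 2 * inner x y"
  using ahlfors_bracket_radicand_ge[of x y] by (meson order_trans zero_le_power2)

lemma ahlfors_bracket_nonneg: "0 \<le> ahlfors_bracket x y"
  using ahlfors_bracket_radicand_nonneg[of x y]
  by (simp add: ahlfors_bracket_def ahlfors_bracket_radicand)

lemma ahlfors_bracket_power2:
  fixes x y :: "'a::real_inner"
  shows "(ahlfors_bracket x y)\<^sup>2 = 1 + (norm x)\<^sup>2 * (norm y)\<^sup>2 - 2 * inner x y"
  using ahlfors_bracket_radicand_nonneg[of x y]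
  by (simp add: ahlfors_bracket_def ahlfors_bracket_radicand)

lemma ahlfors_bracket_ge:
  fixes x y :: "'a::real_inner"
  shows "1 - norm x * norm y \<le> ahlfors_bracket x y"
  using ahlfors_bracket_radicand_ge[of x y]
  by (simp add: ahlfors_bracket_def ahlfors_bracket_radicand real_le_rsqrt)

lemma ahlfors_bracket_pos:
  fixes x y :: "'a::real_inner"
  assumes "norm x < 1" "norm y < 1"
  shows "0 < ahlfors_bracket x y"
  using ahlfors_bracket_ge[of x y] assms mult_strict_mono[of "norm x" 1 "norm y" 1] by simp

lemma ahlfors_bracket_commute: "ahlfors_bracket x y = ahlfors_bracket y x"
  by (simp add: ahlfors_bracket_def dist_commute mult.commute)

lemma ahlfors_bracket_sphere:
  fixes x z :: "'a::real_inner"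
  assumes "norm z = 1"
  shows "ahlfors_bracket x z = dist x z"
  using assms by (simp add: ahlfors_bracket_def)

lemma dist_less_ahlfors_bracket:
  fixes x y :: "'a::real_inner"
  assumes "norm x < 1" "norm y < 1"
  shows "dist x y < ahlfors_bracket x y"
proof -
  have "0 < (1 - (norm x)\<^sup>2) * (1 - (norm y)\<^sup>2)"
    using assms by (simp add: abs_square_less_1)
  then have "sqrt ((dist x y)\<^sup>2) < ahlfors_bracket x y"
    unfolding ahlfors_bracket_def by (subst real_sqrt_less_iff) simp
  then show ?thesis
    by simp
qed

lemma tanh_half_rho_ball:
  fixes x y :: "'a::euclidean_space"
  assumes "norm x < 1" "norm y < 1"
  shows "tanh (rho_ball x y / 2) = dist x y / ahlfors_bracket x y"
proof -
  have "0 < ahlfors_bracket x y"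
    using assms by (intro ahlfors_bracket_pos)
  with dist_less_ahlfors_bracket[OF assms]
  have "-1 < dist x y / ahlfors_bracket x y" "dist x y / ahlfors_bracket x y < 1"
    by (simp_all add: order.strict_trans2[of "-1" 0])
  then show ?thesis
    unfolding rho_ball_def ahlfors_bracket_def[symmetric] by (simp add: tanh_artanh_real)
qed

(* |x|^2 y - x = |x|^2 (y - x'), where x' = x / |x|^2 is the inverse point of x in the unit sphere. *)
lemma norm_inversion_diff:
  fixes x y :: "'a::real_inner"
  shows "norm ((norm x)\<^sup>2 *\<^sub>R y - x) = norm x * ahlfors_bracket x y"
proof -
  have "(norm ((norm x)\<^sup>2 *\<^sub>R y - x))\<^sup>2 = (norm x * ahlfors_bracket x y)\<^sup>2"
    unfolding norm_scaleR_diff_power2 power_mult_distrib ahlfors_bracket_power2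
    by (simp add: algebra_simps power2_eq_square)
  then show ?thesis
    by (rule power2_eq_imp_eq) (simp_all add: ahlfors_bracket_nonneg)
qed

lemma ahlfors_bracket_le_sphere:
  fixes x y z :: "'a::real_inner"
  assumes "norm z = 1"
  shows "ahlfors_bracket x y \<le> dist x z + norm x * dist z y"
proof (cases "x = 0")
  case True
  then have "ahlfors_bracket x y = 1"
    using ahlfors_bracket_power2[of x y] by (simp add: ahlfors_bracket_def)
  with True assms show ?thesis
    by simp
next
  case False
  have "(norm x)\<^sup>2 *\<^sub>R y - x = (norm x)\<^sup>2 *\<^sub>R (y - z) + ((norm x)\<^sup>2 *\<^sub>R z - x)"
    by (simp add: algebra_simps)
  then have "norm ((norm x)\<^sup>2 *\<^sub>R y - x)
      \<le> norm ((norm x)\<^sup>2 *\<^sub>R (y - z)) + norm ((norm x)\<^sup>2 *\<^sub>R z - x)"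
    by (metis norm_triangle_ineq)
  also have "norm ((norm x)\<^sup>2 *\<^sub>R (y - z)) = (norm x)\<^sup>2 * dist z y"
    by (simp add: dist_norm norm_minus_commute)
  finally have "norm x * ahlfors_bracket x y \<le> norm x * (dist x z + norm x * dist z y)"
    unfolding norm_inversion_diff ahlfors_bracket_sphere[OF assms]
    by (simp add: dist_norm norm_minus_commute power2_eq_square algebra_simps)
  with False show ?thesis
    by (simp add: mult_le_cancel_left_pos)
qed

definition sphere_detour :: "'a::real_normed_vector \<Rightarrow> 'a \<Rightarrow> real" where
  "sphere_detour x y = Inf {dist x z + dist z y | z. z \<in> sphere 0 1}"

lemma s_metric_ball:
  fixes x y :: "'a::euclidean_space"
  shows "s_metric (ball 0 1) x y = dist x y / sphere_detour x y"
  by (simp add: s_metric_def sphere_detour_def)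

lemma sphere_detour_le:
  assumes "norm z = 1"
  shows "sphere_detour x y \<le> dist x z + dist z y"
  unfolding sphere_detour_def using assms
  by (intro cInf_lower) (auto intro: bdd_belowI[of _ 0])

lemma sphere_detour_commute: "sphere_detour x y = sphere_detour y x"
  by (simp add: sphere_detour_def dist_commute add.commute)

lemma sphere_detour_ge:
  fixes x y :: "'a::euclidean_space"
  assumes "norm x \<le> r" "norm y \<le> r"
  shows "2 * ahlfors_bracket x y / (1 + r) \<le> sphere_detour x y"
proof -
  have r: "0 < 1 + r"
    using assms(1) norm_ge_zero[of x] by linarith
  have "2 * ahlfors_bracket x y / (1 + r) \<le> dist x z + dist z y" if "norm z = 1" for z
  proof -
    have "2 * ahlfors_bracket x y \<le> (1 + norm y) * dist x z + (1 + norm x) * dist z y"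
      using ahlfors_bracket_le_sphere[OF that, of x y] ahlfors_bracket_le_sphere[OF that, of y x]
      by (simp add: ahlfors_bracket_commute dist_commute algebra_simps)
    also have "\<dots> \<le> (1 + r) * (dist x z + dist z y)"
      using assms by (simp add: distrib_left mult_right_mono add_mono)
    finally show ?thesis
      using r by (simp add: pos_divide_le_eq mult.commute)
  qed
  moreover obtain z :: 'a where "norm z = 1"
    using vector_choose_size[of 1] by auto
  ultimately show ?thesis
    unfolding sphere_detour_def by (intro cInf_greatest) auto
qed

lemma sphere_detour_pos:
  fixes x y :: "'a::euclidean_space"
  assumes "norm x < 1" "norm y < 1"
  shows "0 < sphere_detour x y"
  using ahlfors_bracket_pos[OF assms] sphere_detour_ge[of x 1 y] assms by simp

lemma s_metric_ball_le_tanh_half_rho: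
  fixes x y :: "'a::euclidean_space"
  assumes "norm x \<le> r" "norm y \<le> r" "r < 1"
  shows "s_metric (ball 0 1) x y \<le> (1 + r) / 2 * tanh (rho_ball x y / 2)"
proof -
  have x: "norm x < 1" and y: "norm y < 1" and r: "0 < 1 + r"
    using assms norm_ge_zero[of x] by linarith+
  have "0 < 2 * ahlfors_bracket x y / (1 + r)"
    using ahlfors_bracket_pos[OF x y] r by simp
  with sphere_detour_ge[OF assms(1,2)]
  have "dist x y / sphere_detour x y \<le> dist x y / (2 * ahlfors_bracket x y / (1 + r))"
    by (intro divide_left_mono mult_pos_pos) auto
  also have "\<dots> = (1 + r) / 2 * (dist x y / ahlfors_bracket x y)"
    by simp
  finally show ?thesis
    by (simp only: s_metric_ball tanh_half_rho_ball[OF x y])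
qed

lemma one_add_div_two_le:
  fixes r :: real
  assumes "0 \<le> r" "r \<le> 1"
  shows "(1 + r) / 2 \<le> (1 + r\<^sup>2) / (2 * sqrt (1 - 2 * r + 2 * r\<^sup>2))"
proof -
  have q: "0 < 1 - 2 * r + 2 * r\<^sup>2"
    using sum_power2_gt_zero_iff[of "1 - r" r] by (simp add: power2_diff algebra_simps)
  have "((1 + r) * sqrt (1 - 2 * r + 2 * r\<^sup>2))\<^sup>2 = (1 + r\<^sup>2)\<^sup>2 - r\<^sup>2 * (1 - r) * (3 + r)"
    using q by (simp add: power_mult_distrib) algebra
  also have "\<dots> \<le> (1 + r\<^sup>2)\<^sup>2"
    using assms by simp
  finally have "(1 + r) * sqrt (1 - 2 * r + 2 * r\<^sup>2) \<le> 1 + r\<^sup>2"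
    by (rule power2_le_imp_le) simp
  with q show ?thesis
    by (simp add: field_simps)
qed

lemma dG_ball:
  fixes y :: "'a::euclidean_space"
  assumes "norm y \<le> 1"
  shows "dG (ball 0 1) y = 1 - norm y"
  unfolding dG_def frontier_ball[OF zero_less_one]
proof (rule cInf_eq_minimum)
  obtain m where m: "norm m = 1" "y = norm y *\<^sub>R m"
    using exists_unit_direction by blast
  then have "dist y m = norm ((1 - norm y) *\<^sub>R m)"
    by (metis dist_norm norm_minus_commute scaleR_left_diff_distrib scaleR_one)
  with m(1) assms show "1 - norm y \<in> {dist y z |z. z \<in> sphere 0 1}"
    by force
next
  fix d
  assume "d \<in> {dist y z |z. z \<in> sphere (0::'a) 1}"
  then obtain z :: 'a where "d = dist y z" "norm z = 1"
    by auto
  then show "1 - norm y \<le> d"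
    using norm_triangle_ineq2[of z y] by (simp add: dist_norm norm_minus_commute)
qed

lemma refl_set_ball:
  fixes y :: "'a::euclidean_space"
  assumes "norm y < 1"
  shows "refl_set (ball 0 1) y = {2 *\<^sub>R m - y | m. norm m = 1 \<and> y = norm y *\<^sub>R m}"
proof (intro set_eqI iffI)
  fix yt
  assume yt: "yt \<in> refl_set (ball 0 1) y"
  define m where "m = (y + yt) /\<^sub>R 2"
  have m: "norm m = 1" and "dist y yt = 2 * (1 - norm y)"
    using yt assms by (auto simp: refl_set_def dG_ball m_def)
  moreover have "2 *\<^sub>R (m - y) = yt - y"
    unfolding m_def by (simp add: algebra_simps scaleR_2)
  then have "dist y yt = 2 * norm (m - y)"
    by (metis dist_norm norm_minus_commute norm_scaleR abs_numeral)
  ultimately have "norm (1 *\<^sub>R m - y) = 1 - norm y"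
    by simp
  then have "(norm (1 *\<^sub>R m - y))\<^sup>2 = (1 - norm y)\<^sup>2"
    by simp
  then have "inner y m = norm y"
    unfolding norm_scaleR_diff_power2 m(1) by (simp add: algebra_simps power2_eq_square)
  then have "(norm (norm y *\<^sub>R m - y))\<^sup>2 = 0"
    unfolding norm_scaleR_diff_power2 m(1) by (simp add: power2_eq_square)
  then have "y = norm y *\<^sub>R m"
    by simp
  moreover have "yt = 2 *\<^sub>R m - y"
    unfolding m_def by (simp add: algebra_simps)
  ultimately show "yt \<in> {2 *\<^sub>R m - y | m. norm m = 1 \<and> y = norm y *\<^sub>R m}"
    using m(1) by blast
next
  fix yt
  assume "yt \<in> {2 *\<^sub>R m - y | m. norm m = 1 \<and> y = norm y *\<^sub>R m}"
  then obtain m where m: "norm m = 1" "y = norm y *\<^sub>R m" and yt: "yt = 2 *\<^sub>R m - y"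
    by blast
  have "y - yt = 2 *\<^sub>R (y - m)"
    unfolding yt by (simp add: algebra_simps scaleR_2)
  also have "y - m = (norm y - 1) *\<^sub>R m"
    by (subst (1) m(2)) (simp add: algebra_simps)
  finally have "dist y yt = 2 * (1 - norm y)"
    using m(1) assms by (simp add: dist_norm)
  moreover have "(y + yt) /\<^sub>R 2 = m"
    unfolding yt by simp
  then have "(y + yt) /\<^sub>R 2 \<in> sphere 0 1"
    using m(1) by simp
  ultimately show "yt \<in> refl_set (ball 0 1) y"
    using assms unfolding refl_set_def by (simp add: dG_ball)
qed

(* (2 - b) m is the mirror image of b m in the hyperplane tangent to the unit sphere at m. *)
lemma dist_le_dist_reflection:
  fixes z m :: "'a::real_inner"
  assumes "norm z \<le> 1" "norm m = 1" "b \<le> 1"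
  shows "dist z (b *\<^sub>R m) \<le> dist z ((2 - b) *\<^sub>R m)"
proof -
  have e: "(norm (c *\<^sub>R m - z))\<^sup>2 = c\<^sup>2 - 2 * c * inner z m + (norm z)\<^sup>2" for c
    using norm_scaleR_diff_power2[of c m z] assms(2) by simp
  have "inner z m \<le> 1"
    using Cauchy_Schwarz_ineq2[of z m] assms by simp
  with assms have "0 \<le> 4 * ((1 - b) * (1 - inner z m))"
    by simp
  also have "\<dots> = ((2 - b)\<^sup>2 - 2 * (2 - b) * inner z m) - (b\<^sup>2 - 2 * b * inner z m)"
    by (simp add: power2_eq_square algebra_simps)
  also have "\<dots> = (norm ((2 - b) *\<^sub>R m - z))\<^sup>2 - (norm (b *\<^sub>R m - z))\<^sup>2"
    unfolding e by simp
  finally have "(norm (b *\<^sub>R m - z))\<^sup>2 \<le> (norm ((2 - b) *\<^sub>R m - z))\<^sup>2"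
    by simp
  then have "norm (b *\<^sub>R m - z) \<le> norm ((2 - b) *\<^sub>R m - z)"
    by (rule power2_le_imp_le) simp
  then show ?thesis
    by (simp add: dist_norm norm_minus_commute)
qed

lemma sphere_detour_le_reflection:
  fixes p m :: "'a::euclidean_space"
  assumes "norm p \<le> 1" "norm m = 1" "0 \<le> b" "b \<le> 1"
  shows "sphere_detour p (b *\<^sub>R m) \<le> dist p ((2 - b) *\<^sub>R m)"
proof -
  define f where "f u = norm ((1 - u) *\<^sub>R p + u *\<^sub>R ((2 - b) *\<^sub>R m))" for u :: real
  have "continuous_on {0..1} f"
    unfolding f_def by (intro continuous_intros)
  moreover have "f 0 \<le> 1" "1 \<le> f 1"
    using assms unfolding f_def by auto
  ultimately obtain u where u: "0 \<le> u" "u \<le> 1" "f u = 1"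
    using IVT'[of f 0 1 1] by auto
  define z where "z = (1 - u) *\<^sub>R p + u *\<^sub>R ((2 - b) *\<^sub>R m)"
  have z: "norm z = 1"
    using u unfolding z_def f_def by simp
  have "z \<in> closed_segment p ((2 - b) *\<^sub>R m)"
    using u unfolding z_def closed_segment_def by auto
  then have "dist p z + dist z ((2 - b) *\<^sub>R m) = dist p ((2 - b) *\<^sub>R m)"
    by (simp add: between_mem_segment[symmetric] between)
  moreover have "dist z (b *\<^sub>R m) \<le> dist z ((2 - b) *\<^sub>R m)"
    using z assms by (intro dist_le_dist_reflection) simp_all
  ultimately show ?thesis
    using sphere_detour_le[OF z, of p "b *\<^sub>R m"] by linarith
qed

lemma refl_set_ball_nonempty:
  fixes y :: "'a::euclidean_space"
  assumes "norm y < 1"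
  shows "refl_set (ball 0 1) y \<noteq> {}"
  using exists_unit_direction[of y] assms by (auto simp: refl_set_ball)

lemma sphere_detour_le_refl_set:
  fixes x y yt :: "'a::euclidean_space"
  assumes "norm x < 1" "norm y < 1" "yt \<in> refl_set (ball 0 1) y"
  shows "sphere_detour x y \<le> dist x yt"
proof -
  obtain m where m: "norm m = 1" "y = norm y *\<^sub>R m" "yt = 2 *\<^sub>R m - y"
    using assms(2,3) by (auto simp: refl_set_ball)
  define b where "b = norm y"
  have y: "y = b *\<^sub>R m"
    unfolding b_def by (rule m(2))
  have yt: "yt = (2 - b) *\<^sub>R m"
    unfolding m(3) y by (simp add: algebra_simps)
  have "sphere_detour x (b *\<^sub>R m) \<le> dist x ((2 - b) *\<^sub>R m)"
    using assms(1,2) m(1) unfolding b_def by (intro sphere_detour_le_reflection) simp_all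
  then show ?thesis
    unfolding y yt .
qed

lemma sphere_detour_le_w_denominator:
  fixes x y :: "'a::euclidean_space"
  assumes "norm x < 1" "norm y < 1"
  shows "sphere_detour x y \<le> min (Inf {dist x yt | yt. yt \<in> refl_set (ball 0 1) y})
                                  (Inf {dist y xt | xt. xt \<in> refl_set (ball 0 1) x})"
proof -
  have "sphere_detour x y \<le> Inf {dist x yt | yt. yt \<in> refl_set (ball 0 1) y}"
    using assms refl_set_ball_nonempty[OF assms(2)]
    by (intro cInf_greatest) (auto intro: sphere_detour_le_refl_set)
  moreover have "sphere_detour y x \<le> Inf {dist y xt | xt. xt \<in> refl_set (ball 0 1) x}"
    using assms refl_set_ball_nonempty[OF assms(1)]
    by (intro cInf_greatest) (auto intro: sphere_detour_le_refl_set)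
  ultimately show ?thesis
    by (simp add: sphere_detour_commute)
qed

lemma w_metric_ball_le_s_metric:
  fixes x y :: "'a::euclidean_space"
  assumes "norm x < 1" "norm y < 1"
  shows "w_metric (ball 0 1) x y \<le> s_metric (ball 0 1) x y"
proof -
  define M where "M = min (Inf {dist x yt | yt. yt \<in> refl_set (ball 0 1) y})
                          (Inf {dist y xt | xt. xt \<in> refl_set (ball 0 1) x})"
  have "sphere_detour x y \<le> M" "0 < sphere_detour x y"
    unfolding M_def using sphere_detour_le_w_denominator[OF assms] sphere_detour_pos[OF assms] .
  then have "dist x y / M \<le> dist x y / sphere_detour x y"
    by (intro divide_left_mono mult_pos_pos) simp_all
  then show ?thesis
    unfolding w_metric_def s_metric_ball M_def .
qed

lemma w_metric_ball_ge:
  fixes x y yt :: "'a::euclidean_space"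
  assumes "norm x < 1" "norm y < 1" "yt \<in> refl_set (ball 0 1) y"
  shows "dist x y / dist x yt \<le> w_metric (ball 0 1) x y"
proof -
  define M where "M = min (Inf {dist x yt | yt. yt \<in> refl_set (ball 0 1) y})
                          (Inf {dist y xt | xt. xt \<in> refl_set (ball 0 1) x})"
  have "Inf {dist x yt | yt. yt \<in> refl_set (ball 0 1) y} \<le> dist x yt"
    using assms(3) by (intro cInf_lower) (auto intro: bdd_belowI[of _ 0])
  then have "M \<le> dist x yt"
    unfolding M_def by linarith
  moreover have "0 < M"
    using sphere_detour_le_w_denominator[OF assms(1,2)] sphere_detour_pos[OF assms(1,2)]
    unfolding M_def by linarith
  ultimately have "dist x y / dist x yt \<le> dist x y / M"
    by (intro divide_left_mono mult_pos_pos) auto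
  then show ?thesis
    unfolding w_metric_def M_def .
qed

lemma reflection_poly_bound:
  fixes r a b t :: real
  assumes "0 \<le> r" "r \<le> a" "a \<le> b" "b < 1" "\<bar>t\<bar> \<le> 1"
  shows "(1 + r)\<^sup>2 * (a\<^sup>2 + (2 - b)\<^sup>2 - 2 * a * (2 - b) * t)
    \<le> (5 + 2 * r + r\<^sup>2) * (1 + a\<^sup>2 * b\<^sup>2 - 2 * a * b * t)"
proof -
  define K where "K = 5 + 2 * r + r\<^sup>2"
  have K: "4 \<le> K"
    using assms unfolding K_def by simp
  have "(1 - a) * (1 - b) \<le> (1 - r) * (1 - b)" "(1 - a) * (1 - b) \<le> (1 - a) * (1 - r)"
    using assms by (auto intro: mult_right_mono mult_left_mono)
  then have "(1 + r) * (2 - a - b) \<le> 2 * (1 - a * b)"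
    by (simp add: algebra_simps)
  then have "((1 + r) * (2 - a - b))\<^sup>2 \<le> (2 * (1 - a * b))\<^sup>2"
    using assms by (intro power_mono) auto
  also have "\<dots> = 4 * (1 - a * b)\<^sup>2"
    by algebra
  also have "\<dots> \<le> K * (1 - a * b)\<^sup>2"
    using K by (intro mult_right_mono) simp_all
  finally have at_one: "(1 + r)\<^sup>2 * (2 - a - b)\<^sup>2 \<le> K * (1 - a * b)\<^sup>2"
    by (simp add: power_mult_distrib)
  have "(1 + r) * (2 + a - b) \<le> (1 + r) * 2"
    using assms by (intro mult_left_mono) auto
  then have "((1 + r) * (2 + a - b))\<^sup>2 \<le> ((1 + r) * 2)\<^sup>2"
    using assms by (intro power_mono) auto
  also have "\<dots> = K * (1 + r\<^sup>2)\<^sup>2 - (r ^ 3 + r\<^sup>2 + 3 * r - 1)\<^sup>2"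
    unfolding K_def by algebra
  also have "\<dots> \<le> K * (1 + r\<^sup>2)\<^sup>2"
    by simp
  also have "\<dots> \<le> K * (1 + a * b)\<^sup>2"
  proof -
    have "r * r \<le> a * b"
      using assms by (intro mult_mono) auto
    then have "(1 + r\<^sup>2)\<^sup>2 \<le> (1 + a * b)\<^sup>2"
      by (intro power_mono) (auto simp: power2_eq_square)
    with K show ?thesis
      by (intro mult_left_mono) simp_all
  qed
  finally have at_minus_one: "(1 + r)\<^sup>2 * (2 + a - b)\<^sup>2 \<le> K * (1 + a * b)\<^sup>2"
    by (simp add: power_mult_distrib)
  \<comment> \<open>Both sides are affine in \<open>t\<close>, so the cases \<open>t = 1\<close> and \<open>t = -1\<close> suffice.\<close>
  have "2 * (K * (1 + a\<^sup>2 * b\<^sup>2 - 2 * a * b * t) - (1 + r)\<^sup>2 * (a\<^sup>2 + (2 - b)\<^sup>2 - 2 * a * (2 - b) * t))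
      = (1 + t) * (K * (1 - a * b)\<^sup>2 - (1 + r)\<^sup>2 * (2 - a - b)\<^sup>2)
        + (1 - t) * (K * (1 + a * b)\<^sup>2 - (1 + r)\<^sup>2 * (2 + a - b)\<^sup>2)"
    by algebra
  also have "\<dots> \<ge> 0"
    using at_one at_minus_one assms(5)
    by (auto intro!: add_nonneg_nonneg[OF mult_nonneg_nonneg mult_nonneg_nonneg])
  finally show ?thesis
    unfolding K_def by simp
qed

lemma dist_reflection_le_ahlfors_bracket:
  fixes x y :: "'a::real_inner"
  assumes "0 \<le> r" "r \<le> norm x" "norm x \<le> norm y" "norm y < 1" "y \<noteq> 0"
  shows "(1 + r) * dist x ((2 - norm y) *\<^sub>R sgn y) \<le> sqrt (5 + 2 * r + r\<^sup>2) * ahlfors_bracket x y"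
proof -
  define t where "t = inner (sgn x) (sgn y)"
  have t: "\<bar>t\<bar> \<le> 1"
    using Cauchy_Schwarz_ineq2[of "sgn x" "sgn y"] unfolding t_def
    by (smt (verit) mult_le_one norm_ge_zero norm_sgn)
  have xy: "inner x y = norm x * norm y * t"
    unfolding t_def by (metis inner_scaleR_left inner_scaleR_right mult.assoc scaleR_norm_sgn)
  have "inner x (sgn y) = norm x * t"
    unfolding t_def by (metis inner_scaleR_left scaleR_norm_sgn)
  then have dist_power2: "(dist x ((2 - norm y) *\<^sub>R sgn y))\<^sup>2
      = (norm x)\<^sup>2 + (2 - norm y)\<^sup>2 - 2 * norm x * (2 - norm y) * t"
    using norm_scaleR_diff_power2[of "2 - norm y" "sgn y" x] assms(5)
    by (simp add: dist_norm norm_minus_commute norm_sgn algebra_simps)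
  have bracket_power2: "(ahlfors_bracket x y)\<^sup>2 = 1 + (norm x)\<^sup>2 * (norm y)\<^sup>2 - 2 * norm x * norm y * t"
    by (simp add: ahlfors_bracket_power2 xy)
  have K: "0 \<le> 5 + 2 * r + r\<^sup>2"
    using assms(1) by simp
  have "((1 + r) * dist x ((2 - norm y) *\<^sub>R sgn y))\<^sup>2
      = (1 + r)\<^sup>2 * ((norm x)\<^sup>2 + (2 - norm y)\<^sup>2 - 2 * norm x * (2 - norm y) * t)"
    unfolding power_mult_distrib dist_power2 ..
  also have "\<dots> \<le> (5 + 2 * r + r\<^sup>2) * (1 + (norm x)\<^sup>2 * (norm y)\<^sup>2 - 2 * norm x * norm y * t)"
    by (rule reflection_poly_bound[OF assms(1-4) t])
  also have "\<dots> = (sqrt (5 + 2 * r + r\<^sup>2) * ahlfors_bracket x y)\<^sup>2"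
    by (simp only: power_mult_distrib bracket_power2 real_sqrt_pow2[OF K])
  finally show ?thesis
    by (rule power2_le_imp_le) (intro mult_nonneg_nonneg real_sqrt_ge_zero K ahlfors_bracket_nonneg)
qed

lemma tanh_half_rho_ball_le_w_metric:
  fixes x y :: "'a::euclidean_space"
  assumes "0 \<le> r" "r \<le> norm x" "norm x \<le> norm y" "norm y < 1"
  shows "(1 + r) / sqrt (5 + 2 * r + r\<^sup>2) * tanh (rho_ball x y / 2) \<le> w_metric (ball 0 1) x y"
proof (cases "x = y")
  case True
  with assms show ?thesis
    by (simp add: tanh_half_rho_ball w_metric_def)
next
  case False
  have x: "norm x < 1" and y: "norm y < 1"
    using assms by linarith+
  have "y \<noteq> 0"
    using False assms(3) by auto
  define yt where "yt = (2 - norm y) *\<^sub>R sgn y"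
  have "yt \<in> refl_set (ball 0 1) y"
    unfolding refl_set_ball[OF y] yt_def using \<open>y \<noteq> 0\<close>
    by (intro CollectI exI[of _ "sgn y"]) (simp add: norm_sgn algebra_simps)
  have "norm x < norm yt"
    using x y \<open>y \<noteq> 0\<close> by (simp add: yt_def norm_sgn)
  then have D: "0 < dist x yt"
    by auto
  have A: "0 < ahlfors_bracket x y"
    using x y by (simp add: ahlfors_bracket_pos)
  have K: "0 < 5 + 2 * r + r\<^sup>2"
    using assms(1) by (simp add: add_pos_nonneg)
  have "(1 + r) / sqrt (5 + 2 * r + r\<^sup>2) * tanh (rho_ball x y / 2)
      = dist x y * (1 + r) / (sqrt (5 + 2 * r + r\<^sup>2) * ahlfors_bracket x y)"
    by (simp add: tanh_half_rho_ball[OF x y])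
  also have "\<dots> \<le> dist x y * (1 + r) / ((1 + r) * dist x yt)"
    using dist_reflection_le_ahlfors_bracket[OF assms \<open>y \<noteq> 0\<close>] assms(1) D A K
    unfolding yt_def[symmetric] by (intro divide_left_mono mult_pos_pos) auto
  also have "\<dots> = dist x y / dist x yt"
    using assms(1) by simp
  also have "\<dots> \<le> w_metric (ball 0 1) x y"
    using x y \<open>yt \<in> refl_set (ball 0 1) y\<close> by (rule w_metric_ball_ge)
  finally show ?thesis .
qed

theorem corollary3p8:
  fixes x y :: "'a::euclidean_space" and rl ru :: real
  assumes "DIM('a) \<ge> 2"
    and "0 \<le> rl" and "rl \<le> ru" and "ru < 1"
    and "x \<in> ball 0 1" and "y \<in> ball 0 1"
    and "rl \<le> norm x" and "norm x \<le> norm y" and "norm y \<le> ru"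
  shows "(1 + rl) / sqrt (5 + 2 * rl + rl\<^sup>2) * tanh (rho_ball x y / 2) \<le> w_metric (ball 0 1) x y
    \<and> w_metric (ball 0 1) x y \<le> s_metric (ball 0 1) x y
    \<and> s_metric (ball 0 1) x y \<le> (1 + ru\<^sup>2) / (2 * sqrt (1 - 2 * ru + 2 * ru\<^sup>2)) * tanh (rho_ball x y / 2)"
proof -
  have x: "norm x < 1" and y: "norm y < 1"
    using assms(5,6) by simp_all
  have "0 \<le> tanh (rho_ball x y / 2)"
    by (simp add: tanh_half_rho_ball[OF x y] ahlfors_bracket_nonneg)
  then have "(1 + ru) / 2 * tanh (rho_ball x y / 2)
      \<le> (1 + ru\<^sup>2) / (2 * sqrt (1 - 2 * ru + 2 * ru\<^sup>2)) * tanh (rho_ball x y / 2)"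
    using assms by (intro mult_right_mono one_add_div_two_le) auto
  moreover have "s_metric (ball 0 1) x y \<le> (1 + ru) / 2 * tanh (rho_ball x y / 2)"
    using assms by (intro s_metric_ball_le_tanh_half_rho) auto
  moreover have "(1 + rl) / sqrt (5 + 2 * rl + rl\<^sup>2) * tanh (rho_ball x y / 2) \<le> w_metric (ball 0 1) x y"
    using assms y by (intro tanh_half_rho_ball_le_w_metric) auto
  ultimately show ?thesis
    using w_metric_ball_le_s_metric[OF x y] by linarith
qed

end
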